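(* Let $\langle (x_n,y_n)\rangle_{n\in\mathbb{N}}$ be the solutions in $\mathbb{N}^2$ of $x^2-19\,y^2=1$, indexed so that $y_0<y_1<\cdots$. Suppose $n>0$ is not a power of $2$ and $y_n/39$ is representable. Then the system \[\begin{cases} X^2-19\cdot 39^2\, Y^2 = 1,\\ X+13^2\, Y = r^2+r\,s+5\,s^2,\\ X+19\cdot 3^2\, Y = v^2+v\,u+5\,u^2,\\ Y>0\end{cases}\] has a solution $\bar X,\bar Y,\bar r,\bar s,\bar v,\bar u\in\mathbb{Z}$ such that $\bar r\neq\pm1$ or $\bar s\neq 0$, and moreover $39\,(\bar X+13^2\bar Y)\,(\bar X+19\cdot 3^2\,\bar Y)\mid y_n$.
   Context: $(x_0,y_0)=(1,0)$, $(x_1,y_1)=(170,39)$, $x_n+y_n\sqrt{19}=(170+39\sqrt{19})^n$; note $39\mid y_k$ for all $k$. A non-negative integer $N$ is called representable if $N=w^2+w\,t+5\,t^2$ for some $w,t\in\mathbb{Z}$. *)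

theory Defs
  imports Main
begin

text \<open>Solutions of x^2 - 19 y^2 = 1 in N^2, ordered by increasing y:
  x_n + y_n sqrt 19 = (170 + 39 sqrt 19)^n.\<close>
fun pell19 :: "nat \<Rightarrow> int \<times> int" where
  "pell19 0 = (1, 0)"
| "pell19 (Suc n) = (let (x, y) = pell19 n in (170 * x + 19 * 39 * y, 39 * x + 170 * y))"

definition xs19 :: "nat \<Rightarrow> int" where "xs19 n = fst (pell19 n)"
definition ys19 :: "nat \<Rightarrow> int" where "ys19 n = snd (pell19 n)"

definition representable :: "int \<Rightarrow> bool" where
  "representable N \<longleftrightarrow> N \<ge> 0 \<and> (\<exists>w t :: int. N = w^2 + w * t + 5 * t^2)"

end

theory Submission
  imports Defs "HOL-Computational_Algebra.Primes"
begin

text \<open>Write \<open>n = 2^a (2k + 1)\<close> with \<open>k > 0\<close> and put \<open>X = x_k\<close>, \<open>Y = y_k / 39\<close>.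
  The addition law gives \<open>y_(2k+1) = 39 (X + 169 Y) (X + 171 Y)\<close>, and the two factors are
  odd and coprime since \<open>171 (X + 169 Y)^2 - 169 (X + 171 Y)^2 = 2 (X^2 - 28899 Y^2) = 2\<close>.
  Doubling an index multiplies \<open>y_l\<close> by \<open>2 x_l\<close>, which is coprime to \<open>y_l\<close>, so
  \<open>y_n = y_(2k+1) C\<close> with \<open>C\<close> coprime to both factors.
  Since \<open>w^2 + w t + 5 t^2\<close> is the only reduced form of discriminant \<open>-19\<close>, a positive
  factor of a represented number that is coprime to its cofactor is again represented;
  so both factors are represented, and \<open>X + 169 Y > 1\<close> makes the representation nontrivial.\<close>

definition principal_form :: "int \<Rightarrow> int \<Rightarrow> int" where
  "principal_form w t = w^2 + w*t + 5*t^2"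

lemma principal_form_nonneg: "principal_form w t \<ge> 0"
proof -
  have "4 * principal_form w t = (2*w + t)^2 + 19*t^2"
    by (simp add: principal_form_def power2_eq_square algebra_simps)
  then show ?thesis
    by (smt (verit) zero_le_power2)
qed

lemma representable_iff: "representable N \<longleftrightarrow> (\<exists>w t. N = principal_form w t)"
  unfolding representable_def using principal_form_nonneg unfolding principal_form_def by blast

lemma principal_form_scale: "principal_form (p*w) (p*t) = p^2 * principal_form w t"
  by (simp add: principal_form_def power2_eq_square algebra_simps)

lemma representable_mult_square: "representable A \<Longrightarrow> representable (p^2 * A)"
  unfolding representable_iff by (metis principal_form_scale)

lemma ex_abs_add_mult_le:
  fixes a b :: int
  assumes "a > 0"
  shows "\<exists>h. \<bar>b + 2*a*h\<bar> \<le> a"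
proof -
  have r: "b + 2*a*(- (b div (2*a))) = b mod (2*a)"
    using div_mult_mod_eq[of b "2*a"] by (simp add: algebra_simps)
  have "0 \<le> b mod (2*a)" "b mod (2*a) < 2*a"
    using assms by auto
  then consider "b mod (2*a) \<le> a" | "b mod (2*a) - 2*a \<ge> -a"
    by linarith
  then show ?thesis
  proof cases
    case 1
    then show ?thesis using r \<open>0 \<le> b mod (2*a)\<close> by (intro exI[of _ "- (b div (2*a))"]) simp
  next
    case 2
    have "b + 2*a*(- (b div (2*a)) - 1) = b mod (2*a) - 2*a"
      using r by (simp add: algebra_simps)
    then show ?thesis using 2 \<open>b mod (2*a) < 2*a\<close> by (intro exI[of _ "- (b div (2*a)) - 1"]) simp
  qed
qed

lemma reduced_form_disc_neg19:
  fixes a b c :: int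
  assumes "0 < a" "\<bar>b\<bar> \<le> a" "a \<le> c" "b^2 - 4*a*c = -19"
  shows "a = 1 \<and> c = 5 \<and> (b = 1 \<or> b = -1)"
proof -
  have "b^2 \<le> a^2"
    using assms(1,2) by (metis abs_le_square_iff abs_of_pos)
  moreover have "4*a*a \<le> 4*a*c"
    using assms(1,3) by simp
  ultimately have "3*a^2 \<le> 19"
    using assms(4) by (simp add: power2_eq_square)
  have "a \<le> 2"
  proof (rule ccontr)
    assume "\<not> a \<le> 2"
    then have "9 \<le> a*a" using mult_mono[of 3 a 3 a] by simp
    with \<open>3*a^2 \<le> 19\<close> show False by (simp add: power2_eq_square)
  qed
  have "a = 1"
  proof -
    have "b \<in> {-2, -1, 0, 1, 2}"
      using assms(2) \<open>a \<le> 2\<close> by auto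
    then have "b^2 \<in> {0, 1, 4}"
      by auto
    moreover have "4*a*c = b^2 + 19"
      using assms(4) by simp
    moreover have "a = 1 \<or> a = 2"
      using assms(1) \<open>a \<le> 2\<close> by auto
    ultimately show ?thesis
      by (elim disjE) (auto, presburger+)
  qed
  then have "b \<in> {-1, 0, 1}" "4*c = b^2 + 19"
    using assms(2,4) by auto
  then show ?thesis
    using \<open>a = 1\<close> by (auto simp: power2_eq_square; presburger)
qed

text \<open>Gauss reduction: translate until \<open>|b| \<le> a\<close>, then swap \<open>a\<close> and \<open>c\<close> while \<open>c < a\<close>.\<close>

lemma representable_form_disc_neg19:
  fixes a b c w t :: int
  assumes "a > 0" "b^2 - 4*a*c = -19"
  shows "representable (a*w^2 + b*w*t + c*t^2)"
  using assms
proof (induction "nat a" arbitrary: a b c w t rule: less_induct)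
  case less
  obtain h where "\<bar>b + 2*a*h\<bar> \<le> a"
    using ex_abs_add_mult_le[OF less.prems(1)] by blast
  define b' where "b' = b + 2*a*h"
  then have "\<bar>b'\<bar> \<le> a"
    using \<open>\<bar>b + 2*a*h\<bar> \<le> a\<close> by simp
  define c' where "c' = c + b*h + a*h^2"
  have translate: "a*w^2 + b*w*t + c*t^2 = a*(w - h*t)^2 + b'*(w - h*t)*t + c'*t^2"
    unfolding b'_def c'_def by (simp add: power2_eq_square algebra_simps)
  have disc: "b'^2 - 4*a*c' = -19"
    using less.prems(2) unfolding b'_def c'_def by (simp add: power2_eq_square algebra_simps)
  have "4*(a*c') = b'^2 + 19"
    using disc by simp
  then have "a*c' > 0"
    by (smt (verit) zero_le_power2)
  then have "c' > 0"
    using less.prems(1) by (simp add: zero_less_mult_iff)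
  show ?case
  proof (cases "c' < a")
    case True
    have "representable (c'*t^2 + (-b')*t*(-(w - h*t)) + a*(-(w - h*t))^2)"
    proof (rule less.hyps)
      show "nat c' < nat a" using True \<open>c' > 0\<close> by simp
      show "(-b')^2 - 4*c'*a = -19" using disc by (simp add: algebra_simps)
    qed (use \<open>c' > 0\<close> in simp)
    then show ?thesis
      unfolding translate by (simp add: power2_eq_square algebra_simps)
  next
    case False
    then have "a = 1 \<and> c' = 5 \<and> (b' = 1 \<or> b' = -1)"
      using reduced_form_disc_neg19[OF less.prems(1) \<open>\<bar>b'\<bar> \<le> a\<close> _ disc] by simp
    then have "a*(w - h*t)^2 + b'*(w - h*t)*t + c'*t^2 = principal_form (w - h*t) (b'*t)"
      unfolding principal_form_def by (auto simp: power2_eq_square)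
    then show ?thesis
      unfolding translate representable_iff by blast
  qed
qed

text \<open>Complete \<open>(w, t)\<close> to a unimodular basis \<open>(w, t), (u, v)\<close>: in it the principal form
  becomes \<open>A q X^2 + b X Y + r Y^2\<close> with \<open>r = principal_form u v\<close>, so \<open>A X^2 + b X Y + q r Y^2\<close> has
  discriminant \<open>-19\<close> and represents \<open>A\<close>.\<close>

lemma representable_dvd_principal_form:
  fixes A w t :: int
  assumes "A > 0" "coprime w t" "A dvd principal_form w t"
  shows "representable A"
proof -
  obtain x y where "x*w + y*t = 1"
    using bezout_int[of w t] assms(2) by auto
  then obtain u v where "w*v - t*u = 1"
    by (metis add.commute diff_minus_eq_add mult.commute mult_minus_right)
  obtain q where q: "principal_form w t = A * q"
    using assms(3) by blast
  define b where "b = 2*w*u + w*v + t*u + 10*t*v"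
  have "b^2 - 4 * principal_form w t * principal_form u v = -19 * (w*v - t*u)^2"
    unfolding b_def principal_form_def by (simp add: power2_eq_square algebra_simps)
  then have "b^2 - 4*A*(q * principal_form u v) = -19"
    using \<open>w*v - t*u = 1\<close> q by (simp add: algebra_simps)
  from representable_form_disc_neg19[OF assms(1) this, of 1 0] show ?thesis
    by simp
qed

lemma prime_power_dvd_coprime_mult:
  fixes p a b :: "'a :: factorial_semiring"
  assumes "prime_elem p" "coprime a b" "p ^ n dvd a * b"
  shows "p ^ n dvd a \<or> p ^ n dvd b"
proof (cases "n > 0 \<and> p dvd a")
  case True
  then have "\<not> p dvd b"
    using assms(1,2) coprime_common_divisor prime_elem_not_unit by blast
  then show ?thesis
    using prime_power_dvd_multD[OF assms(1), of n b a] assms(3) True by (simp add: mult.commute)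
next
  case False
  then show ?thesis
    using prime_power_dvd_multD[OF assms(1,3)] by (cases "n = 0") auto
qed

lemma coprime_factor_descent:
  fixes p N A C :: int
  assumes "prime p" "p^2 * N = A * C" "A > 0" "coprime A C"
  obtains A' C' where "N = A' * C'" "A' > 0" "coprime A' C'" "A = A' \<or> A = p^2 * A'"
proof -
  have "p > 1"
    using assms(1) prime_gt_1_int by blast
  have "p^2 dvd A \<or> p^2 dvd C"
    using prime_power_dvd_coprime_mult assms(1,2,4) by (metis dvd_triv_left prime_imp_prime_elem)
  then show ?thesis
  proof
    assume "p^2 dvd A"
    then obtain A' where "A = p^2 * A'"
      by blast
    then show ?thesis
      using that[of A' C] assms(2-4) \<open>p > 1\<close> by (simp add: zero_less_mult_iff)
  next
    assume "p^2 dvd C"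
    then obtain C' where "C = p^2 * C'"
      by blast
    then show ?thesis
      using that[of A C'] assms(2-4) \<open>p > 1\<close> by (simp add: algebra_simps)
  qed
qed

lemma coprime_or_common_prime_divisor:
  fixes w t :: "'a :: factorial_semiring_gcd"
  obtains "w = 0" "t = 0" | "coprime w t" | p where "prime p" "p dvd w" "p dvd t" "w \<noteq> 0 \<or> t \<noteq> 0"
proof (cases "gcd w t = 0 \<or> is_unit (gcd w t)")
  case False
  then obtain p where "prime p" "p dvd gcd w t"
    using prime_divisor_exists by blast
  then show ?thesis
    using that(3) False by simp
qed (use that in auto)

lemma representable_coprime_factor:
  fixes A C :: int
  assumes "representable (A * C)" "A > 0" "coprime A C"
  shows "representable A"
proof -
  obtain w t where "principal_form w t = A * C"
    using assms(1) representable_iff by metis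
  with assms(2,3) show ?thesis
  proof (induction "nat (\<bar>w\<bar> + \<bar>t\<bar>)" arbitrary: w t A C rule: less_induct)
    case less
    consider "w = 0" "t = 0" | "coprime w t" | p where "prime p" "p dvd w" "p dvd t" "w \<noteq> 0 \<or> t \<noteq> 0"
      by (rule coprime_or_common_prime_divisor)
    then show ?case
    proof cases
      case 1
      then have "A = 1"
        using less.prems by (auto simp: principal_form_def)
      then show ?thesis
        unfolding representable_def by (intro conjI exI[of _ 1] exI[of _ 0]) simp_all
    next
      case 2
      then show ?thesis
        using representable_dvd_principal_form less.prems(1,3) by simp
    next
      case 3
      then obtain w' t' where wt: "w = p*w'" "t = p*t'"
        by (meson dvdE)
      have "p > 1"
        using \<open>prime p\<close> prime_gt_1_int by blast
      have "\<bar>w\<bar> + \<bar>t\<bar> = p * (\<bar>w'\<bar> + \<bar>t'\<bar>)" "\<bar>w'\<bar> + \<bar>t'\<bar> > 0"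
        using wt \<open>p > 1\<close> 3(4) by (auto simp: abs_mult algebra_simps)
      then have smaller: "nat (\<bar>w'\<bar> + \<bar>t'\<bar>) < nat (\<bar>w\<bar> + \<bar>t\<bar>)"
        using \<open>p > 1\<close> by simp
      have "p^2 * principal_form w' t' = A * C"
        using less.prems(3) wt principal_form_scale by simp
      then obtain A' C' where "principal_form w' t' = A' * C'" "A' > 0" "coprime A' C'"
          and "A = A' \<or> A = p^2 * A'"
        using coprime_factor_descent \<open>prime p\<close> less.prems(1,2) by blast
      then show ?thesis
        using less.hyps[OF smaller] representable_mult_square by blast
    qed
  qed
qed

lemma pell19_0 [simp]: "xs19 0 = 1" "ys19 0 = 0"
  by (simp_all add: xs19_def ys19_def)

lemma pell19_Suc [simp]:
  "xs19 (Suc n) = 170 * xs19 n + 741 * ys19 n"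
  "ys19 (Suc n) = 39 * xs19 n + 170 * ys19 n"
  by (simp_all add: xs19_def ys19_def split: prod.splits)

lemma pell19_add:
  "xs19 (m + n) = xs19 m * xs19 n + 19 * ys19 m * ys19 n \<and>
   ys19 (m + n) = xs19 m * ys19 n + ys19 m * xs19 n"
  by (induction n) (simp_all add: algebra_simps)

lemma pell19_norm: "xs19 n ^ 2 - 19 * ys19 n ^ 2 = 1"
  by (induction n) (simp_all add: power2_eq_square algebra_simps)

lemma pell19_bounds: "xs19 n \<ge> 1 \<and> ys19 n \<ge> 0"
  by (induction n) simp_all

lemma ys19_pos: "n > 0 \<Longrightarrow> ys19 n > 0"
  using pell19_bounds[of "n - 1"] by (cases n) simp_all

lemma dvd_ys19: "39 dvd ys19 n"
  by (induction n) simp_all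

lemma coprime_xs19_ys19: "coprime (xs19 n) (ys19 n)"
proof (rule coprimeI)
  fix c
  assume "c dvd xs19 n" "c dvd ys19 n"
  then have "c dvd xs19 n ^ 2 - 19 * ys19 n ^ 2"
    by (simp add: power2_eq_square)
  then show "is_unit c"
    using pell19_norm[of n] by simp
qed

lemma ys19_double: "ys19 (2 * l) = 2 * xs19 l * ys19 l"
  using pell19_add[of l l] by (simp add: mult_2[of l])

lemma ys19_pow2_mult:
  assumes "odd D" "D dvd ys19 j"
  shows "\<exists>C. ys19 (2^a * j) = ys19 j * C \<and> coprime D C"
proof (induction a)
  case 0
  show ?case
    by (intro exI[of _ 1]) simp
next
  case (Suc a)
  then obtain C where C: "ys19 (2^a * j) = ys19 j * C" "coprime D C"
    by blast
  define l where "l = 2^a * j"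
  have "D dvd ys19 l"
    using assms(2) C(1) unfolding l_def by simp
  then have "coprime D (xs19 l)"
    using coprime_divisors[OF _ dvd_refl] coprime_xs19_ys19[of l] by (metis coprime_commute)
  moreover have "coprime D 2"
    using assms(1) by (simp add: coprime_commute)
  moreover have "ys19 (2^Suc a * j) = ys19 j * (2 * xs19 l * C)"
    using ys19_double[of l] C(1) unfolding l_def by (simp add: algebra_simps)
  ultimately show ?case
    using C(2) by auto
qed

lemma ys19_odd_index:
  assumes "ys19 k = 39 * Y"
  shows "ys19 (2*k + 1) = 39 * (xs19 k + 169*Y) * (xs19 k + 171*Y)"
proof -
  have "ys19 (2*k + 1) = 39 * xs19 (k + k) + 170 * ys19 (k + k)"
    by (simp add: mult_2[of k])
  also have "\<dots> = 39 * (xs19 k * xs19 k + 19 * (39*Y) * (39*Y)) + 170 * (2 * xs19 k * (39*Y))"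
    using pell19_add[of k k] assms by simp
  also have "\<dots> = 39 * (xs19 k + 169*Y) * (xs19 k + 171*Y)"
    by (simp add: algebra_simps)
  finally show ?thesis .
qed

lemma odd_coprime_of_odd_coeffs:
  fixes a b A B :: int
  assumes "odd a" "odd b" "a*A^2 - b*B^2 = 2"
  shows "odd A \<and> odd B \<and> coprime A B"
proof -
  have "a*A^2 = b*B^2 + 2"
    using assms(3) by simp
  then have "even (a*A^2) \<longleftrightarrow> even (b*B^2)"
    by simp
  then have "even A \<longleftrightarrow> even B"
    using assms(1,2) by simp
  moreover have "\<not> (even A \<and> even B)"
  proof
    assume "even A \<and> even B"
    then obtain A' B' where "A = 2*A'" "B = 2*B'"
      by blast
    then have "a*A^2 - b*B^2 = 4 * (a*A'^2 - b*B'^2)"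
      by (simp add: power2_eq_square algebra_simps)
    then have "4 * (a*A'^2 - b*B'^2) = 2"
      using assms(3) by simp
    then show False
      by presburger
  qed
  ultimately have "odd A" "odd B"
    by blast+
  moreover have "coprime A B"
  proof (rule coprimeI)
    fix c
    assume "c dvd A" "c dvd B"
    then have "c dvd a*A^2 - b*B^2"
      by (simp add: power2_eq_square)
    then have "c dvd 2"
      using assms(3) by simp
    moreover have "odd c"
      using \<open>c dvd A\<close> \<open>odd A\<close> dvd_trans by blast
    ultimately show "is_unit c"
      using coprime_absorb_right[of c 2] coprime_left_2_iff_odd[of c] by blast
  qed
  ultimately show ?thesis
    by blast
qed

lemma representable_coprime_factors:
  fixes A B C :: int
  assumes "representable (A * B * C)" "A > 0" "B > 0" "coprime A B" "coprime (A * B) C"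
  shows "representable A \<and> representable B"
proof -
  have "representable (A * (B*C))" "representable (B * (A*C))"
    using assms(1) by (simp_all add: algebra_simps)
  moreover have "coprime A (B*C)" "coprime B (A*C)"
    using assms(4,5) by (simp_all add: coprime_commute)
  ultimately show ?thesis
    using representable_coprime_factor assms(2,3) by blast
qed

lemma odd_factor_of_not_pow2:
  fixes n :: nat
  assumes "n > 0" "\<not> (\<exists>k. n = 2^k)"
  obtains k a where "k > 0" "n = (2*k + 1) * 2^a"
proof -
  obtain a m where "\<not> 2 dvd m" "n = m * 2^a"
    using prime_power_canonical[OF two_is_prime_nat assms(1)] by blast
  moreover from this assms(2) have "m \<noteq> 1"
    by auto
  ultimately obtain k where "m = 2*k + 1" "k > 0"
    by (metis oddE add_0 gr0I mult_0_right)
  then show ?thesis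
    using that \<open>n = m * 2^a\<close> by blast
qed

lemma ys19_factorization:
  assumes "n > 0" "\<not> (\<exists>k. n = 2^k)"
  obtains X Y C where "X^2 - 19 * 39^2 * Y^2 = 1" "X > 0" "Y > 0"
    "ys19 n = 39 * ((X + 169*Y) * (X + 171*Y) * C)"
    "coprime (X + 169*Y) (X + 171*Y)" "coprime ((X + 169*Y) * (X + 171*Y)) C"
proof -
  obtain k a where "k > 0" and n: "n = (2*k + 1) * 2^a"
    using odd_factor_of_not_pow2 assms by blast
  obtain Y where Y: "ys19 k = 39 * Y"
    using dvd_ys19 by blast
  define X where "X = xs19 k"
  have "Y > 0" "X > 0"
    using ys19_pos[OF \<open>k > 0\<close>] pell19_bounds[of k] Y unfolding X_def by auto
  have norm: "X^2 - 19 * 39^2 * Y^2 = 1"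
    using pell19_norm[of k] Y unfolding X_def by (simp add: power2_eq_square)
  have ym: "ys19 (2*k + 1) = 39 * (X + 169*Y) * (X + 171*Y)"
    using ys19_odd_index[OF Y] unfolding X_def .
  have "171 * (X + 169*Y)^2 - 169 * (X + 171*Y)^2 = 2"
    using norm by (simp add: power2_eq_square algebra_simps)
  then have AB: "odd (X + 169*Y) \<and> odd (X + 171*Y) \<and> coprime (X + 169*Y) (X + 171*Y)"
    by (intro odd_coprime_of_odd_coeffs[of 171 169]) simp_all
  then have odd_AB: "odd ((X + 169*Y) * (X + 171*Y))"
    by simp
  have dvd_AB: "(X + 169*Y) * (X + 171*Y) dvd ys19 (2*k + 1)"
    unfolding ym by (metis dvd_triv_right mult.assoc)
  have "n = 2^a * (2*k + 1)"
    using n by simp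
  then obtain C where C: "ys19 n = ys19 (2*k + 1) * C" "coprime ((X + 169*Y) * (X + 171*Y)) C"
    using ys19_pow2_mult[OF odd_AB dvd_AB, of a] by blast
  have "ys19 n = 39 * ((X + 169*Y) * (X + 171*Y) * C)"
    unfolding C(1) ym by (simp add: ac_simps)
  then show ?thesis
    using that norm \<open>X > 0\<close> \<open>Y > 0\<close> AB C(2) by blast
qed

theorem theorem4:
  fixes n :: nat
  assumes "n > 0"
    and "\<not> (\<exists>k::nat. n = 2 ^ k)"
    and "representable (ys19 n div 39)"
  shows "\<exists>X Y r s v u :: int.
           X^2 - 19 * 39^2 * Y^2 = 1 \<and>
           X + 13^2 * Y = r^2 + r * s + 5 * s^2 \<and>
           X + 19 * 3^2 * Y = v^2 + v * u + 5 * u^2 \<and>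
           Y > 0 \<and>
           ((r \<noteq> 1 \<and> r \<noteq> -1) \<or> s \<noteq> 0) \<and>
           (39 * (X + 13^2 * Y) * (X + 19 * 3^2 * Y)) dvd ys19 n"
proof -
  obtain X Y C where norm: "X^2 - 19 * 39^2 * Y^2 = 1" and "X > 0" "Y > 0"
    and yn: "ys19 n = 39 * ((X + 169*Y) * (X + 171*Y) * C)"
    and coprime: "coprime (X + 169*Y) (X + 171*Y)" "coprime ((X + 169*Y) * (X + 171*Y)) C"
    using ys19_factorization assms(1,2) by blast
  have "representable ((X + 169*Y) * (X + 171*Y) * C)"
    using assms(3) unfolding yn by simp
  then have "representable (X + 169*Y) \<and> representable (X + 171*Y)"
    using representable_coprime_factors[OF _ _ _ coprime] \<open>X > 0\<close> \<open>Y > 0\<close> by simp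
  then obtain r s v u where rs: "X + 169*Y = principal_form r s" and vu: "X + 171*Y = principal_form v u"
    using representable_iff by metis
  have "principal_form r s \<noteq> 1"
    using rs \<open>X > 0\<close> \<open>Y > 0\<close> by simp
  then have "(r \<noteq> 1 \<and> r \<noteq> -1) \<or> s \<noteq> 0"
    by (auto simp: principal_form_def)
  moreover have "X + 13^2 * Y = r^2 + r * s + 5 * s^2" "X + 19 * 3^2 * Y = v^2 + v * u + 5 * u^2"
    using rs vu unfolding principal_form_def by simp_all
  moreover have "39 * (X + 13^2 * Y) * (X + 19 * 3^2 * Y) dvd ys19 n"
  proof -
    have "39 * (X + 169*Y) * (X + 171*Y) dvd ys19 n"
      unfolding yn by (metis dvd_triv_left mult.assoc)
    then show ?thesis
      by simp
  qed
  ultimately show ?thesis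
    using norm \<open>Y > 0\<close> by blast
qed

end
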